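(* Consider the quantized estimation system described in the context, with parameter set $\Theta\subset\mathbb{R}^{D_\theta}$. Assume (i) the interior of $\Theta$ in $\mathbb{R}^{D_\theta}$ is nonempty, and (ii) for every $j\in\{1,\dots,N\}$ and every $\mathbf{s}\in\mathcal{S}_j$, the function $\theta\mapsto q_j^{(\mathbf{s})}(\theta)$ is twice differentiable with respect to $\theta$ for all $\theta\in\Theta$. Then for any $\theta\in\Theta$, any quantization regions $\{I_{jl}^{(r)}\}$ and any statistical models $\{(\mathscr{X}_j,\mathscr{F}_j,\mathscr{P}_j^{\theta})\}$, if $$D_\theta>\lambda(N,\{R_{jl}\}):=\sum_{j=1}^N\prod_{l=1}^{L_j}R_{jl}-N,$$ then the Fisher information matrix $\mathbf{J}(\theta)$ is singular.
   Context: Setting: $\Theta\subset\mathbb{R}^{D_\theta}$ is a parameter set. There are $N\ge 1$ sensors. Sensor $j$ observes a random vector $\mathbf{x}_j$ with statistical model $(\mathscr{X}_j,\mathscr{F}_j,\mathscr{P}_j^{\theta})$, i.e. its law is the probability measure $\mathscr{P}_j^\theta$ on the measurable space $(\mathscr{X}_j,\mathscr{F}_j)$, indexed by $\theta\in\Theta$; $\mathbf{x}_1,\dots,\mathbf{x}_N$ are independent. Each $\mathbf{x}_j$ is partitioned into $L_j\ge1$ disjoint subvectors, $\mathbf{x}_j=[\mathbf{x}_{j1}^T,\dots,\mathbf{x}_{jL_j}^T]^T$. For each $j,l$, $\gamma_{jl}$ is an $R_{jl}$-level vector quantizer ($R_{jl}\ge1$ an integer): there are disjoint quantization regions $I_{jl}^{(1)},\dots,I_{jl}^{(R_{jl})}$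 covering the domain of $\gamma_{jl}$, and $\gamma_{jl}(\mathbf{x}_{jl})=\sum_{r=1}^{R_{jl}} r\,\mathbb{1}\{\mathbf{x}_{jl}\in I_{jl}^{(r)}\}$. The superquantizer $\Gamma_j(\mathbf{x}_j)=[\gamma_{j1}(\mathbf{x}_{j1}),\dots,\gamma_{jL_j}(\mathbf{x}_{jL_j})]^T$ is a measurable map from $(\mathscr{X}_j,\mathscr{F}_j)$ to $\mathbb{R}^{L_j}$ with its Borel algebra. The fusion center receives $\mathbf{u}=[\mathbf{u}_1^T,\dots,\mathbf{u}_N^T]^T$ with $\mathbf{u}_j=\Gamma_j(\mathbf{x}_j)$. Let $\mathcal{S}_j$ be the set of all possible outcomes of $\Gamma_j$, so $|\mathcal{S}_j|=\prod_{l=1}^{L_j}R_{jl}$, and for $\mathbf{s}\in\mathcal{S}_j$ let $q_j^{(\mathbf{s})}(\theta)=\mathscr{P}_j^\theta(\Gamma_j(\mathbf{x}_j)=\mathbf{s})$. The Fisher information matrix for estimating $\theta$ from $\mathbf{u}$ is the $D_\theta\times D_\theta$ matrix $$\mathbf{J}(\theta)=\sum_{j=1}^N\sum_{\mathbf{s}\in\mathcal{S}_j}\frac{1}{q_j^{(\mathbf{s})}(\theta)}\frac{\partial q_j^{(\mathbf{s})}(\theta)}{\partial\theta}\left[\frac{\partial q_j^{(\mathbf{s})}(\theta)}{\partial\theta}\right]^T,$$ where summands with $q_j^{(\mathbf{s})}(\theta)=0$ are omitted. The quantity $\lambda(N,\{R_{jl}\})$ is called the inestimable dimension for quantized data (IDQD).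 *)

theory Defs
  imports "HOL-Probability.Probability"
begin

definition quant :: "(nat \<Rightarrow> nat \<Rightarrow> nat \<Rightarrow> (nat \<Rightarrow> real) set) \<Rightarrow> (nat \<Rightarrow> nat \<Rightarrow> nat)
    \<Rightarrow> nat \<Rightarrow> nat \<Rightarrow> (nat \<Rightarrow> real) \<Rightarrow> nat" where
  "quant I R j l y = (\<Sum>r\<in>{1..R j l}. if y \<in> I j l r then r else 0)"

definition superquant :: "(nat \<Rightarrow> nat \<Rightarrow> nat \<Rightarrow> (nat \<Rightarrow> real) set) \<Rightarrow> (nat \<Rightarrow> nat \<Rightarrow> nat)
    \<Rightarrow> (nat \<Rightarrow> nat) \<Rightarrow> (nat \<Rightarrow> nat \<Rightarrow> nat set) \<Rightarrow> nat \<Rightarrow> (nat \<Rightarrow> real) \<Rightarrow> nat list" where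
  "superquant I R L K j x = map (\<lambda>l. quant I R j l (restrict x (K j l))) [0..<L j]"

definition outcomes :: "(nat \<Rightarrow> nat \<Rightarrow> nat) \<Rightarrow> (nat \<Rightarrow> nat) \<Rightarrow> nat \<Rightarrow> nat list set" where
  "outcomes R L j = {s. length s = L j \<and> (\<forall>l<L j. s ! l \<in> {1..R j l})}"

definition grad :: "(real ^ 'd \<Rightarrow> real) \<Rightarrow> real ^ 'd \<Rightarrow> real ^ 'd" where
  "grad f x = (\<chi> i. frechet_derivative f (at x) (axis i 1))"

definition twice_differentiable_at :: "(real ^ 'd \<Rightarrow> real) \<Rightarrow> real ^ 'd \<Rightarrow> bool" where
  "twice_differentiable_at f x \<longleftrightarrow>
     (\<exists>g. (\<forall>\<^sub>F y in nhds x. (f has_derivative (\<lambda>h. g y \<bullet> h)) (at y)) \<and> g differentiable (at x))"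

text \<open>Fisher information matrix of the quantized data, q j s th = probability of outcome s at sensor j.\<close>
definition fisher :: "nat \<Rightarrow> (nat \<Rightarrow> nat list set) \<Rightarrow> (nat \<Rightarrow> nat list \<Rightarrow> real ^ 'd \<Rightarrow> real)
    \<Rightarrow> real ^ 'd \<Rightarrow> real ^ 'd ^ 'd" where
  "fisher N S q th = (\<Sum>j<N. \<Sum>s\<in>{s\<in>S j. q j s th \<noteq> 0}.
      (\<chi> a b. (1 / q j s th) * (grad (q j s) th $ a) * (grad (q j s) th $ b)))"

definition IDQD :: "nat \<Rightarrow> (nat \<Rightarrow> nat) \<Rightarrow> (nat \<Rightarrow> nat \<Rightarrow> nat) \<Rightarrow> int" where
  "IDQD N L R = (\<Sum>j<N. \<Prod>l<L j. int (R j l)) - int N"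

end

theory Submission
  imports Defs
begin

text \<open>
  For each sensor the outcome probabilities sum to one for all parameters near \<open>\<theta>\<close>, so their
  gradients sum to zero. Hence the gradients of sensor \<open>j\<close> span a space of dimension at most
  \<open>|S\<^sub>j| - 1\<close>, and all gradients together span a space of dimension at most
  \<open>\<lambda>(N, {R\<^sub>j\<^sub>l}) < D\<^sub>\<theta>\<close>. A nonzero vector orthogonal to all of them lies in the kernel of
  the Fisher matrix, which is a sum of rank-one matrices built from these gradients.
\<close>

lemma finite_outcomes: "finite (outcomes R L j)"
  and card_outcomes_le: "card (outcomes R L j) \<le> (\<Prod>l<L j. R j l)"
proof -
  let ?box = "\<Pi>\<^sub>E l\<in>{..<L j}. {1..R j l}"
  let ?coords = "\<lambda>s. \<lambda>l\<in>{..<L j}. s ! l"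
  have inj: "inj_on ?coords (outcomes R L j)"
  proof (intro inj_onI nth_equalityI)
    fix s t i assume "s \<in> outcomes R L j" "t \<in> outcomes R L j" "?coords s = ?coords t"
      and "i < length s"
    then have "i \<in> {..<L j}" by (simp add: outcomes_def)
    then show "s ! i = t ! i" using fun_cong[OF \<open>?coords s = ?coords t\<close>, of i] by simp
  qed (auto simp: outcomes_def)
  have into: "?coords ` outcomes R L j \<subseteq> ?box"
    unfolding outcomes_def by (intro image_subsetI restrict_PiE_iff[THEN iffD2]) auto
  show "finite (outcomes R L j)"
    using inj into by (metis finite_PiE finite_atLeastAtMost finite_lessThan finite_subset
        finite_image_iff)
  have "card (outcomes R L j) \<le> card ?box"
    by (rule card_inj_on_le[OF inj into]) (simp add: finite_PiE)
  then show "card (outcomes R L j) \<le> (\<Prod>l<L j. R j l)"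
    by (simp add: card_PiE)
qed

lemma all_ones_in_outcomes:
  assumes "\<And>l. l < L j \<Longrightarrow> R j l \<ge> 1"
  shows "replicate (L j) 1 \<in> outcomes R L j"
  using assms by (auto simp: outcomes_def)

lemma sum_card_outcomes_minus_1_le_IDQD:
  assumes "\<And>j l. j < N \<Longrightarrow> l < L j \<Longrightarrow> R j l \<ge> 1"
  shows "int (\<Sum>j<N. card (outcomes R L j) - 1) \<le> IDQD N L R"
proof -
  have "int (card (outcomes R L j) - 1) \<le> (\<Prod>l<L j. int (R j l)) - 1" if "j < N" for j
  proof -
    have "card (outcomes R L j) \<ge> 1"
      using all_ones_in_outcomes[of L j R] assms[OF that] finite_outcomes
      by (metis One_nat_def Suc_leI card_gt_0_iff empty_iff)
    then show ?thesis
      using card_outcomes_le[of R L j] by (simp add: of_nat_diff flip: of_nat_prod)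
  qed
  then have "int (\<Sum>j<N. card (outcomes R L j) - 1) \<le> (\<Sum>j<N. (\<Prod>l<L j. int (R j l)) - 1)"
    unfolding of_nat_sum by (rule sum_mono) simp
  then show ?thesis
    by (simp add: IDQD_def sum_subtractf)
qed

lemma quant_eq:
  assumes disj: "\<And>r r'. r \<in> {1..R j l} \<Longrightarrow> r' \<in> {1..R j l} \<Longrightarrow> r \<noteq> r'
                   \<Longrightarrow> I j l r \<inter> I j l r' = {}"
    and r: "r \<in> {1..R j l}" and y: "y \<in> I j l r"
  shows "quant I R j l y = r"
proof -
  have "(if y \<in> I j l r' then r' else 0) = (if r' = r then r else 0)" if "r' \<in> {1..R j l}" for r'
    using disj[OF that r] y by auto
  then have "quant I R j l y = (\<Sum>r'\<in>{1..R j l}. if r' = r then r else 0)"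
    unfolding quant_def by (rule sum.cong[OF refl])
  also have "\<dots> = r"
    using r by simp
  finally show ?thesis .
qed

lemma superquant_in_outcomes:
  assumes disj: "\<And>l r r'. l < L j \<Longrightarrow> r \<in> {1..R j l} \<Longrightarrow> r' \<in> {1..R j l} \<Longrightarrow> r \<noteq> r'
                   \<Longrightarrow> I j l r \<inter> I j l r' = {}"
    and cover: "\<And>l. l < L j \<Longrightarrow> \<exists>r\<in>{1..R j l}. restrict x (K j l) \<in> I j l r"
  shows "superquant I R L K j x \<in> outcomes R L j"
proof -
  have "quant I R j l (restrict x (K j l)) \<in> {1..R j l}" if l: "l < L j" for l
  proof -
    obtain r where r: "r \<in> {1..R j l}" "restrict x (K j l) \<in> I j l r"
      using cover[OF l] by blast
    have "quant I R j l (restrict x (K j l)) = r"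
      using disj[OF l] r by (rule quant_eq)
    with r show ?thesis
      by simp
  qed
  then show ?thesis
    by (simp add: superquant_def outcomes_def)
qed

lemma (in prob_space) sum_prob_fibres_eq_1:
  assumes meas: "f \<in> measurable M (count_space UNIV)"
    and "finite S" and range: "\<And>x. x \<in> space M \<Longrightarrow> f x \<in> S"
  shows "(\<Sum>s\<in>S. prob {x \<in> space M. f x = s}) = 1"
proof -
  have "{x \<in> space M. f x = s} \<in> events" for s
    using measurable_sets[OF meas, of "{s}"] by (simp add: vimage_def Int_def conj_commute)
  then have "prob {x \<in> space M. True} = (\<Sum>s\<in>S. prob {x \<in> space M. f x = s})"
    using \<open>finite S\<close> range by (intro prob_sum) auto
  then show ?thesis
    using prob_space by simp
qed

lemma sum_outcome_probs_eq_1: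
  assumes "prob_space P" "sets P = sets M"
    and meas: "superquant I R L K j \<in> measurable M (count_space UNIV)"
    and disj: "\<And>l r r'. l < L j \<Longrightarrow> r \<in> {1..R j l} \<Longrightarrow> r' \<in> {1..R j l} \<Longrightarrow> r \<noteq> r'
                   \<Longrightarrow> I j l r \<inter> I j l r' = {}"
    and cover: "\<And>l x. l < L j \<Longrightarrow> x \<in> space M \<Longrightarrow> \<exists>r\<in>{1..R j l}. restrict x (K j l) \<in> I j l r"
  shows "(\<Sum>s\<in>outcomes R L j. measure P {x \<in> space M. superquant I R L K j x = s}) = 1"
proof -
  interpret prob_space P
    by fact
  have space_eq: "space P = space M"
    using \<open>sets P = sets M\<close> by (rule sets_eq_imp_space_eq)
  have "superquant I R L K j \<in> measurable P (count_space UNIV)"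
    using meas measurable_cong_sets[OF \<open>sets P = sets M\<close> refl] by blast
  moreover have "superquant I R L K j x \<in> outcomes R L j" if "x \<in> space P" for x
    using disj cover[OF _ that[unfolded space_eq]] by (rule superquant_in_outcomes)
  ultimately show ?thesis
    unfolding space_eq[symmetric] by (rule sum_prob_fibres_eq_1[OF _ finite_outcomes])
qed

lemma twice_differentiable_at_imp_differentiable:
  "twice_differentiable_at f x \<Longrightarrow> f differentiable (at x)"
  unfolding twice_differentiable_at_def
  by (metis differentiableI eventually_nhds_x_imp_x)

lemma grad_sum_eq_0_if_locally_constant_sum:
  fixes f :: "'s \<Rightarrow> real ^ 'd \<Rightarrow> real"
  assumes "finite S" and diff: "\<And>s. s \<in> S \<Longrightarrow> f s differentiable (at x)"
    and "open U" "x \<in> U" "\<And>y. y \<in> U \<Longrightarrow> (\<Sum>s\<in>S. f s y) = c"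
  shows "(\<Sum>s\<in>S. grad (f s) x) = 0"
proof -
  let ?Df = "\<lambda>s. frechet_derivative (f s) (at x)"
  have "((\<lambda>y. \<Sum>s\<in>S. f s y) has_derivative (\<lambda>h. \<Sum>s\<in>S. ?Df s h)) (at x)"
    using diff by (intro has_derivative_sum) (simp add: frechet_derivative_works)
  moreover have "((\<lambda>y. \<Sum>s\<in>S. f s y) has_derivative (\<lambda>h. 0)) (at x)"
    by (rule has_derivative_transform_within_open[of "\<lambda>y. c" _ _ _ U])
       (use assms in auto)
  ultimately have "(\<lambda>h. \<Sum>s\<in>S. ?Df s h) = (\<lambda>h. 0)"
    by (rule has_derivative_unique)
  then show ?thesis
    by (simp add: vec_eq_iff grad_def sum_component fun_eq_iff)
qed

lemma image_subset_span_remove_if_sum_eq_0: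
  assumes "finite A" "a \<in> A" and sum0: "(\<Sum>x\<in>A. f x) = 0"
  shows "f ` A \<subseteq> span (f ` (A - {a}))"
proof -
  have "f a = - (\<Sum>x\<in>A - {a}. f x)"
    using sum0 sum.remove[OF assms(1,2), of f] by (simp add: eq_neg_iff_add_eq_0)
  also have "\<dots> \<in> span (f ` (A - {a}))"
    by (intro span_neg span_sum span_base) auto
  finally show ?thesis
    by (auto intro: span_base)
qed

lemma card_UN_image_remove_le:
  assumes "finite I" "\<And>i. i \<in> I \<Longrightarrow> finite (A i)" "\<And>i. i \<in> I \<Longrightarrow> a i \<in> A i"
  shows "card (\<Union>i\<in>I. f i ` (A i - {a i})) \<le> (\<Sum>i\<in>I. card (A i) - 1)"
proof -
  have "card (\<Union>i\<in>I. f i ` (A i - {a i})) \<le> (\<Sum>i\<in>I. card (f i ` (A i - {a i})))"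
    using assms(1) by (rule card_UN_le)
  also have "\<dots> \<le> (\<Sum>i\<in>I. card (A i) - 1)"
    using assms by (intro sum_mono) (metis card_Diff_singleton card_image_le finite_Diff)
  finally show ?thesis .
qed

lemma exists_orthogonal_to_span:
  fixes W :: "'a::euclidean_space set"
  assumes "finite W" "card W < DIM('a)"
  obtains v where "v \<noteq> 0" "\<And>w. w \<in> span W \<Longrightarrow> v \<bullet> w = 0"
proof -
  have "dim W < DIM('a)"
    using dim_le_card[OF span_superset \<open>finite W\<close>] assms(2) by linarith
  then show ?thesis
    using orthogonal_to_subspace_exists that unfolding orthogonal_def by blast
qed

lemma sum_rank_one_mult_vec_eq_0:
  fixes g :: "'j \<Rightarrow> 's \<Rightarrow> real ^ 'd" and c :: "'j \<Rightarrow> 's \<Rightarrow> real"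
  assumes "\<And>j s. j \<in> J \<Longrightarrow> s \<in> T j \<Longrightarrow> g j s \<bullet> v = 0"
  shows "(\<Sum>j\<in>J. \<Sum>s\<in>T j. (\<chi> a b. c j s * g j s $ a * g j s $ b)) *v v = 0"
proof -
  have rank_one: "(\<chi> a b. c j s * g j s $ a * g j s $ b) *v v = (c j s * (g j s \<bullet> v)) *\<^sub>R g j s"
    for j s
    by (simp add: vec_eq_iff matrix_vector_mult_def inner_vec_def sum_distrib_left mult_ac)
  have sum_mult: "(\<Sum>i\<in>I. A i) *v v = (\<Sum>i\<in>I. A i *v v)"
    for I and A :: "'i \<Rightarrow> real ^ 'd ^ 'd"
    by (induction I rule: infinite_finite_induct) (simp_all add: matrix_vector_mult_add_rdistrib)
  show ?thesis
    by (simp add: sum_mult rank_one assms)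
qed

lemma not_invertible_sum_rank_one:
  fixes g :: "'j \<Rightarrow> 's \<Rightarrow> real ^ 'd" and c :: "'j \<Rightarrow> 's \<Rightarrow> real"
  assumes "finite J" and fin: "\<And>j. j \<in> J \<Longrightarrow> finite (S j)"
    and base: "\<And>j. j \<in> J \<Longrightarrow> base j \<in> S j"
    and sum0: "\<And>j. j \<in> J \<Longrightarrow> (\<Sum>s\<in>S j. g j s) = 0"
    and few: "(\<Sum>j\<in>J. card (S j) - 1) < CARD('d)"
    and T: "\<And>j. j \<in> J \<Longrightarrow> T j \<subseteq> S j"
  shows "\<not> invertible (\<Sum>j\<in>J. \<Sum>s\<in>T j. (\<chi> a b. c j s * g j s $ a * g j s $ b))"
proof
  define W where "W = (\<Union>j\<in>J. g j ` (S j - {base j}))"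
  have "card W < DIM(real ^ 'd)"
    using card_UN_image_remove_le[of J S base g] assms(1) fin base few unfolding W_def by simp
  then obtain v :: "real ^ 'd" where "v \<noteq> 0" and v_orth: "\<And>w. w \<in> span W \<Longrightarrow> v \<bullet> w = 0"
    using exists_orthogonal_to_span[of W] \<open>finite J\<close> fin by (auto simp: W_def)
  have "g j s \<in> span W" if "j \<in> J" "s \<in> S j" for j s
  proof -
    have "g j ` S j \<subseteq> span (g j ` (S j - {base j}))"
      using that by (intro image_subset_span_remove_if_sum_eq_0 fin base sum0)
    also have "\<dots> \<subseteq> span W"
      using that(1) by (intro span_mono) (auto simp: W_def)
    finally show ?thesis
      using that(2) by blast
  qed
  then have "(\<Sum>j\<in>J. \<Sum>s\<in>T j. (\<chi> a b. c j s * g j s $ a * g j s $ b)) *v v = 0"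
    using T v_orth by (intro sum_rank_one_mult_vec_eq_0) (metis inner_commute subsetD)
  moreover assume "invertible (\<Sum>j\<in>J. \<Sum>s\<in>T j. (\<chi> a b. c j s * g j s $ a * g j s $ b))"
  ultimately show False
    using \<open>v \<noteq> 0\<close> invertible_left_inverse matrix_left_invertible_ker by blast
qed

theorem theorem1:
  fixes \<Theta> :: "(real ^ 'd) set"
    and N :: nat
    and n :: "nat \<Rightarrow> nat"
    and L :: "nat \<Rightarrow> nat"
    and K :: "nat \<Rightarrow> nat \<Rightarrow> nat set"
    and R :: "nat \<Rightarrow> nat \<Rightarrow> nat"
    and I :: "nat \<Rightarrow> nat \<Rightarrow> nat \<Rightarrow> (nat \<Rightarrow> real) set"
    and M :: "nat \<Rightarrow> (nat \<Rightarrow> real) measure"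
    and P :: "nat \<Rightarrow> real ^ 'd \<Rightarrow> (nat \<Rightarrow> real) measure"
    and U :: "(real ^ 'd) set"
    and \<theta> :: "real ^ 'd"
  defines "q \<equiv> (\<lambda>j s th. measure (P j th) {x \<in> space (M j). superquant I R L K j x = s})"
  assumes N_pos: "N \<ge> 1"
    and interior_ne: "interior \<Theta> \<noteq> {}"
    and vec_space: "\<And>j x i. j < N \<Longrightarrow> x \<in> space (M j) \<Longrightarrow> n j \<le> i \<Longrightarrow> x i = 0"
    and L_pos: "\<And>j. j < N \<Longrightarrow> L j \<ge> 1"
    and K_ne: "\<And>j l. j < N \<Longrightarrow> l < L j \<Longrightarrow> K j l \<noteq> {}"
    and K_disj: "\<And>j l l'. j < N \<Longrightarrow> l < L j \<Longrightarrow> l' < L j \<Longrightarrow> l \<noteq> l' \<Longrightarrow> K j l \<inter> K j l' = {}"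
    and K_cover: "\<And>j. j < N \<Longrightarrow> (\<Union>l<L j. K j l) = {..<n j}"
    and R_pos: "\<And>j l. j < N \<Longrightarrow> l < L j \<Longrightarrow> R j l \<ge> 1"
    and I_disj: "\<And>j l r r'. j < N \<Longrightarrow> l < L j \<Longrightarrow> r \<in> {1..R j l} \<Longrightarrow> r' \<in> {1..R j l}
                   \<Longrightarrow> r \<noteq> r' \<Longrightarrow> I j l r \<inter> I j l r' = {}"
    and I_cover: "\<And>j l x. j < N \<Longrightarrow> l < L j \<Longrightarrow> x \<in> space (M j)
                   \<Longrightarrow> \<exists>r\<in>{1..R j l}. restrict x (K j l) \<in> I j l r"
    and Gamma_meas: "\<And>j. j < N \<Longrightarrow> superquant I R L K j \<in> measurable (M j) (count_space UNIV)"
    and U_open: "open U"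
    and Theta_U: "\<Theta> \<subseteq> U"
    and P_sets: "\<And>j th. j < N \<Longrightarrow> th \<in> U \<Longrightarrow> sets (P j th) = sets (M j)"
    and P_prob: "\<And>j th. j < N \<Longrightarrow> th \<in> U \<Longrightarrow> prob_space (P j th)"
    and q_C2: "\<And>j s th. j < N \<Longrightarrow> s \<in> outcomes R L j \<Longrightarrow> th \<in> \<Theta>
                   \<Longrightarrow> twice_differentiable_at (q j s) th"
    and theta_in: "\<theta> \<in> \<Theta>"
    and dim_big: "int CARD('d) > IDQD N L R"
  shows "\<not> invertible (fisher N (outcomes R L) q \<theta>)"
proof -
  have probs_sum_1: "(\<Sum>s\<in>outcomes R L j. q j s th) = 1" if "j < N" "th \<in> U" for j th
    unfolding q_def using P_prob[OF that] P_sets[OF that] Gamma_meas[OF that(1)]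
    by (rule sum_outcome_probs_eq_1) (use I_disj I_cover that(1) in auto)
  have grads_sum_0: "(\<Sum>s\<in>outcomes R L j. grad (q j s) \<theta>) = 0" if j: "j < N" for j
    using U_open Theta_U theta_in probs_sum_1[OF j]
    by (intro grad_sum_eq_0_if_locally_constant_sum[of _ _ _ U 1])
       (auto simp: finite_outcomes intro: twice_differentiable_at_imp_differentiable q_C2[OF j])
  have "int (\<Sum>j<N. card (outcomes R L j) - 1) \<le> IDQD N L R"
    using R_pos by (rule sum_card_outcomes_minus_1_le_IDQD)
  then have few: "(\<Sum>j<N. card (outcomes R L j) - 1) < CARD('d)"
    using dim_big by linarith
  show ?thesis
    unfolding fisher_def
    by (rule not_invertible_sum_rank_one[where S = "outcomes R L" and base = "\<lambda>j. replicate (L j) 1"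
          and g = "\<lambda>j s. grad (q j s) \<theta>" and c = "\<lambda>j s. 1 / q j s \<theta>"])
       (use few all_ones_in_outcomes R_pos in \<open>auto simp: finite_outcomes grads_sum_0\<close>)
qed

end
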